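(* Let $N\ge2$ and let $F=F(N,\mathcal D)$ be a connected GSC with $|\mathcal D|>N$. Then $|\mathcal D|\ge 2N-1$. Conversely, for every integer $k\ge2N-1$ with $k\le N^2-1$, and for $k=N$, there exists a digit set $\mathcal D\subset\{0,\dots,N-1\}^2$ with $|\mathcal D|=k$ such that $F(N,\mathcal D)$ is connected.
   Context: GSC: $N\ge2$, $\mathcal D\subset\{0,\dots,N-1\}^2$ with $1<|\mathcal D|<N^2$, $\varphi_i(x)=\frac1N(x+i)$, and $F(N,\mathcal D)$ is the unique nonempty compact set with $F=\bigcup_{i\in\mathcal D}\varphi_i(F)$. *)

theory Defs
  imports "HOL-Analysis.Analysis"
begin

definition gsc_map :: "nat \<Rightarrow> nat \<times> nat \<Rightarrow> real \<times> real \<Rightarrow> real \<times> real" where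
  "gsc_map N i x = (1 / real N) *\<^sub>R (x + (real (fst i), real (snd i)))"

definition GSC :: "nat \<Rightarrow> (nat \<times> nat) set \<Rightarrow> (real \<times> real) set" where
  "GSC N D = (THE F. compact F \<and> F \<noteq> {} \<and> F = (\<Union>i\<in>D. gsc_map N i ` F))"

end

theory Submission
  imports Defs
begin

text \<open>If F is connected, the digits form a connected graph when two digits are joined whenever
  their pieces \<phi>_i(F) meet. Two pieces can only meet along a common side or corner of their
  grid cells, and then F itself has to meet the corresponding opposite sides or corners of the unit
  square. If all four corners of the square lie in F, the functions x - y and x + y both range
  over an interval of length 2(N - 1) on D while an edge changes them by at most 2 in total.
  Otherwise, up to a reflection, either every edge preserves a row, a column or a diagonal, so that
  |D| \<le> N, or the digits meet all N rows and all N columns and remain connected when only digits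
  on a common row or column are joined; growing D one digit at a time along such edges creates at
  most one new row or column per step, whence 2N \<le> |D| + 1.
  Conversely, the bottom row, the left column and any set of further digits closed under moving
  left give a connected carpet, since neighbouring pieces share a corner.\<close>

section \<open>The attractor as a nested intersection\<close>

lemma gsc_map_Pair [simp]:
  "gsc_map N (a, b) (x, y) = ((x + real a) / real N, (y + real b) / real N)"
  by (simp add: gsc_map_def divide_inverse algebra_simps)

lemma continuous_on_gsc_map: "continuous_on S (gsc_map N i)"
  unfolding gsc_map_def by (intro continuous_intros)

lemma dist_gsc_map: "dist (gsc_map N i x) (gsc_map N i y) = dist x y / real N"
proof -
  have "gsc_map N i x - gsc_map N i y = (1 / real N) *\<^sub>R (x - y)"
    by (simp add: gsc_map_def algebra_simps)
  then show ?thesis by (simp add: dist_norm)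
qed

lemma inj_gsc_map: "N > 0 \<Longrightarrow> inj (gsc_map N i)"
  unfolding inj_def gsc_map_def by auto

definition unit_square :: "(real \<times> real) set" where
  "unit_square = {0..1} \<times> {0..1}"

lemma gsc_map_unit_square:
  assumes "i \<in> {0..<N} \<times> {0..<N}"
  shows "gsc_map N i ` unit_square \<subseteq> unit_square"
proof
  fix p assume "p \<in> gsc_map N i ` unit_square"
  then obtain x y where p: "p = gsc_map N i (x, y)" "0 \<le> x" "x \<le> 1" "0 \<le> y" "y \<le> 1"
    by (auto simp: unit_square_def)
  obtain a b where ab: "i = (a, b)" "real a + 1 \<le> real N" "real b + 1 \<le> real N"
    using assms by fastforce
  have "0 \<le> (t + real c) / real N \<and> (t + real c) / real N \<le> 1"
    if "0 \<le> t" "t \<le> 1" "real c + 1 \<le> real N" for t :: real and c :: nat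
    using that by (simp add: divide_le_eq_1)
  then show "p \<in> unit_square"
    using p ab by (simp add: unit_square_def)
qed

fun gsc_approx :: "nat \<Rightarrow> (nat \<times> nat) set \<Rightarrow> nat \<Rightarrow> (real \<times> real) set" where
  "gsc_approx N D 0 = unit_square"
| "gsc_approx N D (Suc k) = (\<Union>i\<in>D. gsc_map N i ` gsc_approx N D k)"

lemma INT_UN_eq_UN_INT_decreasing:
  assumes "finite I" and dec: "\<And>i k. B i (Suc k) \<subseteq> B i k"
  shows "(\<Inter>k. \<Union>i\<in>I. B i k) = (\<Union>i\<in>I. \<Inter>k. B i k)"
proof
  show "(\<Inter>k. \<Union>i\<in>I. B i k) \<subseteq> (\<Union>i\<in>I. \<Inter>k. B i k)"
  proof
    fix x assume x: "x \<in> (\<Inter>k. \<Union>i\<in>I. B i k)"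
    show "x \<in> (\<Union>i\<in>I. \<Inter>k. B i k)"
    proof (rule ccontr)
      assume "x \<notin> (\<Union>i\<in>I. \<Inter>k. B i k)"
      then have "\<forall>i\<in>I. \<exists>k. x \<notin> B i k" by blast
      then obtain k where k: "\<forall>i\<in>I. x \<notin> B i (k i)" by (rule bchoice[THEN exE])
      define K where "K = (\<Sum>i\<in>I. k i)"
      have "B i K \<subseteq> B i (k i)" if "i \<in> I" for i
      proof (rule lift_Suc_antimono_le[of "B i"])
        show "k i \<le> K" unfolding K_def by (rule member_le_sum) (use that assms(1) in auto)
      qed (rule dec)
      then show False using x k by blast
    qed
  qed
qed blast

locale gsc =
  fixes N :: nat and D :: "(nat \<times> nat) set"
  assumes N_ge_2: "N \<ge> 2" and digits_grid: "D \<subseteq> {0..<N} \<times> {0..<N}" and digits_nonempty: "D \<noteq> {}"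
begin

lemma N_pos: "N > 0"
  using N_ge_2 by simp

lemma finite_digits: "finite D"
  using digits_grid by (rule finite_subset) simp

lemma compact_gsc_approx: "compact (gsc_approx N D k)"
proof (induction k)
  case 0
  then show ?case by (simp add: unit_square_def compact_Times)
next
  case (Suc k)
  then show ?case
    by (simp only: gsc_approx.simps)
      (intro compact_UN finite_digits compact_continuous_image continuous_on_gsc_map)
qed

lemma gsc_approx_nonempty: "gsc_approx N D k \<noteq> {}"
proof (induction k)
  case 0
  have "(0, 0) \<in> unit_square" by (simp add: unit_square_def)
  then show ?case by auto
next
  case (Suc k)
  then obtain i x where "i \<in> D" "x \<in> gsc_approx N D k"
    using digits_nonempty by blast
  then show ?case unfolding gsc_approx.simps by blast
qed

lemma gsc_approx_Suc_subset: "gsc_approx N D (Suc k) \<subseteq> gsc_approx N D k"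
proof (induction k)
  case 0
  show ?case unfolding gsc_approx.simps
    using digits_grid by (intro UN_least gsc_map_unit_square) auto
next
  case (Suc k)
  have "gsc_approx N D (Suc (Suc k)) = (\<Union>i\<in>D. gsc_map N i ` gsc_approx N D (Suc k))"
    by (rule gsc_approx.simps(2))
  also have "\<dots> \<subseteq> (\<Union>i\<in>D. gsc_map N i ` gsc_approx N D k)"
    by (intro UN_mono image_mono Suc order_refl)
  finally show ?case by simp
qed

lemma gsc_approx_antimono: "m \<le> n \<Longrightarrow> gsc_approx N D n \<subseteq> gsc_approx N D m"
  by (rule lift_Suc_antimono_le[of "gsc_approx N D", OF gsc_approx_Suc_subset])

lemma self_similar_INT_gsc_approx:
  "(\<Inter>k. gsc_approx N D k) = (\<Union>i\<in>D. gsc_map N i ` (\<Inter>k. gsc_approx N D k))"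
proof -
  have "(\<Inter>k. gsc_approx N D k) = (\<Inter>k. gsc_approx N D (Suc k))"
  proof (rule equalityI)
    show "(\<Inter>k. gsc_approx N D (Suc k)) \<subseteq> (\<Inter>k. gsc_approx N D k)"
      using gsc_approx_Suc_subset by blast
  qed blast
  also have "\<dots> = (\<Union>i\<in>D. \<Inter>k. gsc_map N i ` gsc_approx N D k)"
    unfolding gsc_approx.simps
    by (rule INT_UN_eq_UN_INT_decreasing[OF finite_digits])
      (intro image_mono gsc_approx_Suc_subset)
  also have "\<dots> = (\<Union>i\<in>D. gsc_map N i ` (\<Inter>k. gsc_approx N D k))"
    using image_INT[OF inj_gsc_map[OF N_pos], of UNIV "gsc_approx N D"] by simp
  finally show ?thesis .
qed

lemma self_similar_compact_subset:
  assumes G: "compact G" "G = (\<Union>i\<in>D. gsc_map N i ` G)"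
    and H: "compact H" "H \<noteq> {}" "H = (\<Union>i\<in>D. gsc_map N i ` H)"
  shows "G \<subseteq> H"
proof
  fix x assume x: "x \<in> G"
  have "continuous_on G (\<lambda>x. infdist x H)" by (intro continuous_intros)
  then obtain x0 where x0: "x0 \<in> G" "\<And>x. x \<in> G \<Longrightarrow> infdist x H \<le> infdist x0 H"
    using compact_attains_sup[OF compact_continuous_image[OF _ G(1)]] x by blast
  obtain i y where iy: "i \<in> D" "y \<in> G" "x0 = gsc_map N i y"
    using x0(1) G(2) by blast
  obtain h where h: "h \<in> H" "infdist y H = dist y h"
    using infdist_attains_inf[OF compact_imp_closed[OF H(1)] H(2)] by blast
  \<comment> \<open>mapping a point of H nearest to y shows that the maximal distance shrinks by the factor N\<close>
  have "gsc_map N i h \<in> H" using H(3) iy(1) h(1) by blast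
  then have "infdist x0 H \<le> dist y h / real N"
    using iy(3) infdist_le dist_gsc_map by metis
  also have "\<dots> \<le> infdist x0 H / real N"
    using h x0(2)[OF iy(2)] N_pos by (simp add: divide_right_mono)
  finally have "infdist x0 H * real N \<le> infdist x0 H"
    using N_pos by (simp add: le_divide_eq)
  moreover have "infdist x0 H * 2 \<le> infdist x0 H * real N"
    using N_ge_2 infdist_nonneg[of x0 H] by (intro mult_left_mono) auto
  ultimately have "infdist x0 H \<le> 0" by linarith
  then have "infdist x H = 0"
    using x0(2)[OF x] infdist_nonneg[of x H] by linarith
  then show "x \<in> H"
    using in_closure_iff_infdist_zero[OF H(2)] compact_imp_closed[OF H(1)] by (simp add: closure_closed)
qed

lemma compact_INT_gsc_approx: "compact (\<Inter>k. gsc_approx N D k)"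
proof (rule compact_Inter)
  show "\<And>T. T \<in> range (gsc_approx N D) \<Longrightarrow> compact T"
    using compact_gsc_approx by blast
qed simp

lemma INT_gsc_approx_nonempty: "(\<Inter>k. gsc_approx N D k) \<noteq> {}"
  by (rule compact_nest[OF compact_gsc_approx gsc_approx_nonempty gsc_approx_antimono])

lemma GSC_eq_INT_gsc_approx: "GSC N D = (\<Inter>k. gsc_approx N D k)"
  unfolding GSC_def
proof (rule the_equality)
  fix F assume "compact F \<and> F \<noteq> {} \<and> F = (\<Union>i\<in>D. gsc_map N i ` F)"
  then show "F = (\<Inter>k. gsc_approx N D k)"
    using self_similar_compact_subset compact_INT_gsc_approx INT_gsc_approx_nonempty
      self_similar_INT_gsc_approx by (metis subset_antisym)
qed (use compact_INT_gsc_approx INT_gsc_approx_nonempty self_similar_INT_gsc_approx in simp)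

lemma compact_GSC: "compact (GSC N D)"
  by (simp add: GSC_eq_INT_gsc_approx compact_INT_gsc_approx)

lemma GSC_nonempty: "GSC N D \<noteq> {}"
  by (simp add: GSC_eq_INT_gsc_approx INT_gsc_approx_nonempty)

lemma GSC_self_similar: "GSC N D = (\<Union>i\<in>D. gsc_map N i ` GSC N D)"
  unfolding GSC_eq_INT_gsc_approx by (rule self_similar_INT_gsc_approx)

lemma GSC_subset_unit_square: "GSC N D \<subseteq> unit_square"
  unfolding GSC_eq_INT_gsc_approx by (metis INT_lower UNIV_I gsc_approx.simps(1))

end

section \<open>Connectivity of a relation on a finite set\<close>

definition rel_connected :: "('a \<Rightarrow> 'a \<Rightarrow> bool) \<Rightarrow> 'a set \<Rightarrow> bool" where
  "rel_connected R D \<longleftrightarrow> (\<forall>S. S \<subseteq> D \<longrightarrow> S \<noteq> {} \<longrightarrow> S \<noteq> D \<longrightarrow> (\<exists>x\<in>S. \<exists>y\<in>D - S. R x y))"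

lemma rel_connectedD:
  "rel_connected R D \<Longrightarrow> S \<subseteq> D \<Longrightarrow> S \<noteq> {} \<Longrightarrow> S \<noteq> D \<Longrightarrow> \<exists>x\<in>S. \<exists>y\<in>D - S. R x y"
  unfolding rel_connected_def by blast

lemma rel_connected_mono:
  assumes "rel_connected R D" "\<And>x y. x \<in> D \<Longrightarrow> y \<in> D \<Longrightarrow> R x y \<Longrightarrow> R' x y"
  shows "rel_connected R' D"
  using assms unfolding rel_connected_def by (meson Diff_iff subsetD)

lemma rel_connected_image:
  assumes cc: "rel_connected R D" and R': "\<And>x y. x \<in> D \<Longrightarrow> y \<in> D \<Longrightarrow> R x y \<Longrightarrow> R' (g x) (g y)"
  shows "rel_connected R' (g ` D)"
  unfolding rel_connected_def
proof (intro allI impI)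
  fix S assume S: "S \<subseteq> g ` D" "S \<noteq> {}" "S \<noteq> g ` D"
  have "{x \<in> D. g x \<in> S} \<noteq> {}" "{x \<in> D. g x \<in> S} \<noteq> D"
    using S by auto
  then obtain x y where "x \<in> D" "g x \<in> S" "y \<in> D" "g y \<notin> S" "R x y"
    using rel_connectedD[OF cc, of "{x \<in> D. g x \<in> S}"] by blast
  then show "\<exists>x\<in>S. \<exists>y\<in>g ` D - S. R' x y"
    using R' by blast
qed

lemma rel_connected_invariant:
  assumes cc: "rel_connected R D" and "x0 \<in> D" "P x0"
    and step: "\<And>x y. x \<in> D \<Longrightarrow> y \<in> D \<Longrightarrow> R x y \<Longrightarrow> P x \<Longrightarrow> P y"
    and "z \<in> D"
  shows "P z"
proof (rule ccontr)
  assume "\<not> P z"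
  then obtain x y where "x \<in> D" "P x" "y \<in> D" "\<not> P y" "R x y"
    using rel_connectedD[OF cc, of "{x \<in> D. P x}"] assms(2,3,5) by blast
  then show False using step by blast
qed

text \<open>Connectivity lets one reach all of D from x0 by adding one R-neighbour at a time, so a
  set function that grows by at most c per such step is bounded on D.\<close>

lemma rel_connected_growth:
  fixes \<Phi> :: "'a set \<Rightarrow> int"
  assumes fin: "finite D" and cc: "rel_connected R D" and x0: "x0 \<in> D"
    and step: "\<And>T x y. T \<subseteq> D \<Longrightarrow> x \<in> T \<Longrightarrow> y \<in> D - T \<Longrightarrow> R x y \<Longrightarrow> \<Phi> (insert y T) \<le> \<Phi> T + c"
  shows "\<Phi> D \<le> \<Phi> {x0} + c * (int (card D) - 1)"
proof -
  have grow: "\<exists>T \<subseteq> D. x0 \<in> T \<and> card T = Suc n \<and> \<Phi> T \<le> \<Phi> {x0} + c * int n" if "n < card D" for n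
    using that
  proof (induction n)
    case 0
    show ?case using x0 by (intro exI[of _ "{x0}"]) auto
  next
    case (Suc n)
    then obtain T where T: "T \<subseteq> D" "x0 \<in> T" "card T = Suc n" "\<Phi> T \<le> \<Phi> {x0} + c * int n"
      by auto
    then have "T \<noteq> D" using Suc.prems by auto
    then obtain x y where xy: "x \<in> T" "y \<in> D - T" "R x y"
      using rel_connectedD[OF cc T(1)] T(2) by blast
    have "finite T" using T(1) fin finite_subset by blast
    then have "card (insert y T) = Suc (Suc n)" using xy(2) T(3) by simp
    moreover have "\<Phi> (insert y T) \<le> \<Phi> {x0} + c * int (Suc n)"
      using step[OF T(1) xy] T(4) by (simp add: algebra_simps)
    ultimately show ?case using T(1,2) xy(2) by (intro exI[of _ "insert y T"]) auto
  qed
  have "card D \<ge> 1" using fin x0 by (simp add: Suc_le_eq card_gt_0_iff) blast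
  then obtain T where T: "T \<subseteq> D" "card T = card D" "\<Phi> T \<le> \<Phi> {x0} + c * int (card D - 1)"
    using grow[of "card D - 1"] by auto
  then have "T = D" using card_subset_eq[OF fin] by blast
  then show ?thesis using T(3) \<open>card D \<ge> 1\<close> by (simp add: of_nat_diff)
qed

definition spread :: "('a \<Rightarrow> int) \<Rightarrow> 'a set \<Rightarrow> int" where
  "spread f T = Max (f ` T) - Min (f ` T)"

lemma spread_singleton [simp]: "spread f {x} = 0"
  unfolding spread_def by simp

lemma spread_insert:
  assumes "finite T" "x \<in> T"
  shows "spread f (insert y T) \<le> spread f T + \<bar>f y - f x\<bar>"
proof -
  have "f ` T \<noteq> {}" using assms by auto
  then have "Max (f ` insert y T) = max (f y) (Max (f ` T))"
    "Min (f ` insert y T) = min (f y) (Min (f ` T))" using assms by simp_all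
  moreover have "f x \<le> Max (f ` T)" "Min (f ` T) \<le> f x" using assms by auto
  ultimately show ?thesis unfolding spread_def by (simp add: max_def min_def abs_if)
qed

lemma diff_le_spread:
  assumes "finite T" "p \<in> T" "q \<in> T"
  shows "f p - f q \<le> spread f T"
proof -
  have "f p \<le> Max (f ` T)" "Min (f ` T) \<le> f q" using assms by auto
  then show ?thesis unfolding spread_def by simp
qed

lemma rel_connected_spread_bound:
  fixes f g :: "'a \<Rightarrow> int"
  assumes fin: "finite D" and cc: "rel_connected R D" and x0: "x0 \<in> D"
    and edge: "\<And>x y. x \<in> D \<Longrightarrow> y \<in> D \<Longrightarrow> R x y \<Longrightarrow> \<bar>f y - f x\<bar> + \<bar>g y - g x\<bar> \<le> c"
  shows "spread f D + spread g D \<le> c * (int (card D) - 1)"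
proof -
  have "spread f D + spread g D \<le> spread f {x0} + spread g {x0} + c * (int (card D) - 1)"
  proof (rule rel_connected_growth[OF fin cc x0, where \<Phi> = "\<lambda>T. spread f T + spread g T"])
    fix T x y assume T: "T \<subseteq> D" "x \<in> T" "y \<in> D - T" "R x y"
    have "finite T" using T(1) fin finite_subset by blast
    then show "spread f (insert y T) + spread g (insert y T) \<le> spread f T + spread g T + c"
      using spread_insert[OF _ T(2), of f y] spread_insert[OF _ T(2), of g y] edge[of x y] T
      by fastforce
  qed
  then show ?thesis by simp
qed

lemma rel_connected_card_le:
  fixes g :: "'a \<Rightarrow> nat"
  assumes cc: "rel_connected R D" and x0: "x0 \<in> D"
    and inv: "\<And>x y. x \<in> D \<Longrightarrow> y \<in> D \<Longrightarrow> R x y \<Longrightarrow> f x = f y"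
    and inj: "\<And>x y. x \<in> D \<Longrightarrow> y \<in> D \<Longrightarrow> f x = f y \<Longrightarrow> g x = g y \<Longrightarrow> x = y"
    and "g ` D \<subseteq> {0..<N}"
  shows "card D \<le> N"
proof -
  have "f z = f x0" if "z \<in> D" for z
    using rel_connected_invariant[OF cc x0, of "\<lambda>z. f z = f x0"] inv that by metis
  then have "inj_on g D" using inj by (metis inj_onI)
  then show ?thesis using card_inj_on_le[OF _ assms(5)] by simp
qed

lemma rel_connected_intermediate_value:
  fixes h :: "'a \<Rightarrow> nat"
  assumes cc: "rel_connected R D"
    and edge: "\<And>x y. x \<in> D \<Longrightarrow> y \<in> D \<Longrightarrow> R x y \<Longrightarrow> h y \<le> h x + 1"
    and "p \<in> D" "q \<in> D" "h p \<le> c" "c \<le> h q"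
  shows "c \<in> h ` D"
proof (rule ccontr)
  assume c: "c \<notin> h ` D"
  have "p \<in> {z \<in> D. h z < c}" "q \<notin> {z \<in> D. h z < c}"
    using assms(3-6) c by (auto simp: le_less)
  then have "{z \<in> D. h z < c} \<noteq> {}" "{z \<in> D. h z < c} \<noteq> D"
    using assms(4) by blast+
  then obtain x y where xy: "x \<in> D" "h x < c" "y \<in> D" "\<not> h y < c" "R x y"
    using rel_connectedD[OF cc, of "{z \<in> D. h z < c}"] by blast
  then have "h y = c" using edge[OF xy(1,3,5)] by linarith
  then show False using c xy(3) by blast
qed

lemma rel_connected_image_eq_interval:
  fixes h :: "'a \<Rightarrow> nat"
  assumes cc: "rel_connected R D"
    and edge: "\<And>x y. x \<in> D \<Longrightarrow> y \<in> D \<Longrightarrow> R x y \<Longrightarrow> h y \<le> h x + 1"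
    and "h ` D \<subseteq> {0..<N}" "p \<in> D" "h p = 0" "q \<in> D" "h q = N - 1"
  shows "h ` D = {0..<N}"
proof
  show "{0..<N} \<subseteq> h ` D"
    using assms(3-7) rel_connected_intermediate_value[OF cc edge, where p = p and q = q] by auto
qed fact

section \<open>Connected digit sets in the grid\<close>

definition same_line :: "nat \<times> nat \<Rightarrow> nat \<times> nat \<Rightarrow> bool" where
  "same_line x y \<longleftrightarrow> fst x = fst y \<or> snd x = snd y"

lemma card_lines_le_if_same_line_connected:
  assumes fin: "finite D" and cc: "rel_connected same_line D" and "x0 \<in> D"
  shows "card (fst ` D) + card (snd ` D) \<le> card D + 1"
proof -
  let ?\<Phi> = "\<lambda>T. int (card (fst ` T) + card (snd ` T))"
  have "?\<Phi> D \<le> ?\<Phi> {x0} + 1 * (int (card D) - 1)"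
  proof (rule rel_connected_growth[OF fin cc \<open>x0 \<in> D\<close>])
    fix T x y assume T: "T \<subseteq> D" "x \<in> T" "y \<in> D - T" "same_line x y"
    have "finite T" using T(1) fin finite_subset by blast
    then have "card (fst ` insert y T) \<le> card (fst ` T) + 1"
      "card (snd ` insert y T) \<le> card (snd ` T) + 1"
      by (simp_all add: card_insert_if)
    moreover have "fst ` insert y T = fst ` T \<or> snd ` insert y T = snd ` T"
      using T(2,4) unfolding same_line_def by (metis image_eqI image_insert insert_absorb)
    ultimately show "?\<Phi> (insert y T) \<le> ?\<Phi> T + 1" by auto
  qed
  then show ?thesis by simp
qed

definition hor_adj :: "nat \<times> nat \<Rightarrow> nat \<times> nat \<Rightarrow> bool" where
  "hor_adj x y \<longleftrightarrow> snd x = snd y \<and> (fst y = Suc (fst x) \<or> fst x = Suc (fst y))"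

definition ver_adj :: "nat \<times> nat \<Rightarrow> nat \<times> nat \<Rightarrow> bool" where
  "ver_adj x y \<longleftrightarrow> fst x = fst y \<and> (snd y = Suc (snd x) \<or> snd x = Suc (snd y))"

definition diag_adj :: "nat \<times> nat \<Rightarrow> nat \<times> nat \<Rightarrow> bool" where
  "diag_adj x y \<longleftrightarrow>
    (fst y = Suc (fst x) \<and> snd y = Suc (snd x)) \<or> (fst x = Suc (fst y) \<and> snd x = Suc (snd y))"

definition antidiag_adj :: "nat \<times> nat \<Rightarrow> nat \<times> nat \<Rightarrow> bool" where
  "antidiag_adj x y \<longleftrightarrow>
    (fst y = Suc (fst x) \<and> snd x = Suc (snd y)) \<or> (fst x = Suc (fst y) \<and> snd y = Suc (snd x))"

definition boundary_count :: "nat set \<Rightarrow> nat \<Rightarrow> nat" where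
  "boundary_count A a = card {j. j < a \<and> (j \<in> A \<longleftrightarrow> Suc j \<notin> A)}"

lemma boundary_count_0 [simp]: "boundary_count A 0 = 0"
  unfolding boundary_count_def by simp

lemma boundary_count_Suc:
  "boundary_count A (Suc a) = boundary_count A a + (if a \<in> A \<longleftrightarrow> Suc a \<notin> A then 1 else 0)"
proof -
  have "{j. j < Suc a \<and> (j \<in> A \<longleftrightarrow> Suc j \<notin> A)} =
      (if a \<in> A \<longleftrightarrow> Suc a \<notin> A then insert a else id) {j. j < a \<and> (j \<in> A \<longleftrightarrow> Suc j \<notin> A)}"
    by (auto simp: less_Suc_eq)
  then show ?thesis unfolding boundary_count_def by simp
qed

lemma boundary_count_mono: "a \<le> b \<Longrightarrow> boundary_count A a \<le> boundary_count A b"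
  unfolding boundary_count_def by (rule card_mono) auto

lemma boundary_count_eq_0:
  assumes "boundary_count A a = 0" "j \<le> a"
  shows "j \<in> A \<longleftrightarrow> 0 \<in> A"
  using assms(2)
proof (induction j)
  case (Suc j)
  have "\<not> (j \<in> A \<longleftrightarrow> Suc j \<notin> A)"
    using assms(1) Suc.prems unfolding boundary_count_def by auto
  then show ?case using Suc by auto
qed simp

lemma mem_iff_image_mem:
  assumes "\<forall>x\<in>S. \<forall>y\<in>D - S. f x \<noteq> f y" "z \<in> D"
  shows "z \<in> S \<longleftrightarrow> f z \<in> f ` S"
  using assms by (metis DiffI imageE imageI)

lemma boundary_count_image_Suc:
  assumes sep: "\<forall>x\<in>S. \<forall>y\<in>D - S. f x \<noteq> f y"
    and "w \<in> D" "w' \<in> D" "f w' = Suc (f w)"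
  shows "boundary_count (f ` S) (f w') = boundary_count (f ` S) (f w) + (if w \<in> S \<longleftrightarrow> w' \<notin> S then 1 else 0)"
  using boundary_count_Suc[of "f ` S" "f w"] mem_iff_image_mem[OF sep assms(2)]
    mem_iff_image_mem[OF sep assms(3)] assms(4) by simp

lemma boundary_count_image_ne_0:
  assumes sep: "\<forall>x\<in>S. \<forall>y\<in>D - S. f x \<noteq> f y"
    and S: "S \<subseteq> D" "S \<noteq> {}" "S \<noteq> D" and cover: "f ` D = {0..<N}"
  shows "boundary_count (f ` S) (N - 1) \<noteq> 0"
proof
  assume zero: "boundary_count (f ` S) (N - 1) = 0"
  obtain x where x: "x \<in> S" using S(2) by blast
  obtain y where y: "y \<in> D" "y \<notin> S" using S(1,3) by blast
  have "f x \<in> f ` D" "f y \<in> f ` D" using x y S(1) by blast+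
  then have fx: "f x \<le> N - 1" and fy: "f y \<le> N - 1" unfolding cover by auto
  have "f x \<in> f ` S \<longleftrightarrow> 0 \<in> f ` S" by (rule boundary_count_eq_0[OF zero fx])
  moreover have "f y \<in> f ` S \<longleftrightarrow> 0 \<in> f ` S" by (rule boundary_count_eq_0[OF zero fy])
  moreover have "f x \<in> f ` S" using x by (rule imageI)
  ultimately have "f y \<in> f ` S" by simp
  with mem_iff_image_mem[OF sep y(1)] have "y \<in> S" by (rule iffD2)
  with y(2) show False by contradiction
qed

text \<open>If S shares no row and no column with D - S, then membership in S is determined by the
  column and by the row of a digit, so along a horizontal, vertical or diagonal step the number of
  boundaries of the set of columns of S to the left and that of the set of rows of S below change
  together.\<close>

lemma boundary_counts_agree:
  assumes cc: "rel_connected R D"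
    and edge: "\<And>x y. x \<in> D \<Longrightarrow> y \<in> D \<Longrightarrow> R x y \<Longrightarrow> hor_adj x y \<or> ver_adj x y \<or> diag_adj x y"
    and origin: "(0, 0) \<in> D"
    and sep: "\<forall>x\<in>S. \<forall>y\<in>D - S. fst x \<noteq> fst y \<and> snd x \<noteq> snd y"
    and "z \<in> D"
  shows "boundary_count (fst ` S) (fst z) = boundary_count (snd ` S) (snd z)"
proof (rule rel_connected_invariant[OF cc origin _ _ \<open>z \<in> D\<close>])
  have "\<forall>x\<in>S. \<forall>y\<in>D - S. fst x \<noteq> fst y" "\<forall>x\<in>S. \<forall>y\<in>D - S. snd x \<noteq> snd y"
    using sep by auto
  note col = boundary_count_image_Suc[OF this(1)] and row = boundary_count_image_Suc[OF this(2)]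
  have same_side: "x \<in> S \<longleftrightarrow> y \<in> S" if "x \<in> D" "y \<in> D" "hor_adj x y \<or> ver_adj x y" for x y
  proof -
    have "fst x = fst y \<or> snd x = snd y" using that(3) unfolding hor_adj_def ver_adj_def by auto
    then show ?thesis using sep that(1,2) by (metis DiffI)
  qed
  fix x y assume xy: "x \<in> D" "y \<in> D" "R x y"
    "boundary_count (fst ` S) (fst x) = boundary_count (snd ` S) (snd x)"
  consider "hor_adj x y" | "ver_adj x y"
    | "fst y = Suc (fst x)" "snd y = Suc (snd x)" | "fst x = Suc (fst y)" "snd x = Suc (snd y)"
    using edge[OF xy(1-3)] unfolding diag_adj_def by blast
  then show "boundary_count (fst ` S) (fst y) = boundary_count (snd ` S) (snd y)"
  proof cases
    case 1
    then show ?thesis using col[OF xy(1,2)] col[OF xy(2,1)] same_side[OF xy(1,2)] xy(4)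
      unfolding hor_adj_def by auto
  next
    case 2
    then show ?thesis using row[OF xy(1,2)] row[OF xy(2,1)] same_side[OF xy(1,2)] xy(4)
      unfolding ver_adj_def by auto
  next
    case 3
    then show ?thesis using col[OF xy(1,2)] row[OF xy(1,2)] xy(4) by simp
  next
    case 4
    then show ?thesis using col[OF xy(2,1)] row[OF xy(2,1)] xy(4) by simp
  qed
qed simp

text \<open>By boundary_counts_agree, each of the wrap-around links forces one of the boundary counts
  at N - 1 to vanish, which is impossible for a proper nonempty subset S.\<close>

lemma same_line_connected_if_diag_connected:
  assumes cc: "rel_connected R D"
    and edge: "\<And>x y. x \<in> D \<Longrightarrow> y \<in> D \<Longrightarrow> R x y \<Longrightarrow> hor_adj x y \<or> ver_adj x y \<or> diag_adj x y"
    and origin: "(0, 0) \<in> D" and cover: "fst ` D = {0..<N}" "snd ` D = {0..<N}"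
    and wrap: "(\<exists>b. (0, b) \<in> D \<and> (N - 1, b) \<in> D) \<or> (\<exists>b. (N - 1, b) \<in> D \<and> (0, Suc b) \<in> D)
      \<or> (\<exists>a. (a, 0) \<in> D \<and> (a, N - 1) \<in> D) \<or> (\<exists>a. (a, N - 1) \<in> D \<and> (Suc a, 0) \<in> D)"
  shows "rel_connected same_line D"
  unfolding rel_connected_def
proof (intro allI impI)
  fix S assume S: "S \<subseteq> D" "S \<noteq> {}" "S \<noteq> D"
  show "\<exists>x\<in>S. \<exists>y\<in>D - S. same_line x y"
  proof (rule ccontr)
    assume "\<not> ?thesis"
    then have sep: "\<forall>x\<in>S. \<forall>y\<in>D - S. fst x \<noteq> fst y \<and> snd x \<noteq> snd y"
      unfolding same_line_def by blast
    define cX where "cX = boundary_count (fst ` S)"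
    define cY where "cY = boundary_count (snd ` S)"
    have key: "cX a = cY b" if "(a, b) \<in> D" for a b
      using boundary_counts_agree[OF cc edge origin sep that] unfolding cX_def cY_def by simp
    have mono: "cX a \<le> cX b" "cY a \<le> cY b" if "a \<le> b" for a b
      unfolding cX_def cY_def using that by (simp_all add: boundary_count_mono)
    have zero: "cX 0 = 0" "cY 0 = 0" by (simp_all add: cX_def cY_def)
    have "cX (N - 1) = 0 \<or> cY (N - 1) = 0"
      using wrap
    proof (elim disjE exE conjE)
      fix b assume "(0, b) \<in> D" "(N - 1, b) \<in> D"
      then show ?thesis using key zero by metis
    next
      fix b assume "(N - 1, b) \<in> D" "(0, Suc b) \<in> D"
      then show ?thesis using key zero mono(2)[of b "Suc b"] by fastforce
    next
      fix a assume "(a, 0) \<in> D" "(a, N - 1) \<in> D"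
      then show ?thesis using key zero by metis
    next
      fix a assume "(a, N - 1) \<in> D" "(Suc a, 0) \<in> D"
      then show ?thesis using key zero mono(1)[of a "Suc a"] by fastforce
    qed
    moreover have "cX (N - 1) \<noteq> 0"
      unfolding cX_def using sep by (intro boundary_count_image_ne_0[OF _ S cover(1)]) blast
    moreover have "cY (N - 1) \<noteq> 0"
      unfolding cY_def using sep by (intro boundary_count_image_ne_0[OF _ S cover(2)]) blast
    ultimately show False by blast
  qed
qed

definition diag_corners :: "(nat \<times> nat) set \<Rightarrow> nat \<Rightarrow> bool" where
  "diag_corners D N \<longleftrightarrow> (0, 0) \<in> D \<and> (N - 1, N - 1) \<in> D"

definition antidiag_corners :: "(nat \<times> nat) set \<Rightarrow> nat \<Rightarrow> bool" where
  "antidiag_corners D N \<longleftrightarrow> (N - 1, 0) \<in> D \<and> (0, N - 1) \<in> D"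

definition hor_link :: "(nat \<times> nat) set \<Rightarrow> nat \<Rightarrow> bool" where
  "hor_link D N \<longleftrightarrow> (\<exists>b. (0, b) \<in> D \<and> (N - 1, b) \<in> D)
    \<or> (antidiag_corners D N \<and> (\<exists>b. (0, b) \<in> D \<and> (N - 1, Suc b) \<in> D))
    \<or> (diag_corners D N \<and> (\<exists>b. (N - 1, b) \<in> D \<and> (0, Suc b) \<in> D))"

definition ver_link :: "(nat \<times> nat) set \<Rightarrow> nat \<Rightarrow> bool" where
  "ver_link D N \<longleftrightarrow> (\<exists>a. (a, 0) \<in> D \<and> (a, N - 1) \<in> D)
    \<or> (antidiag_corners D N \<and> (\<exists>a. (a, 0) \<in> D \<and> (Suc a, N - 1) \<in> D))
    \<or> (diag_corners D N \<and> (\<exists>a. (a, N - 1) \<in> D \<and> (Suc a, 0) \<in> D))"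

text \<open>The pieces of two digits x \<noteq> y can only meet if x and y are neighbours in the grid.
  Horizontal neighbours touch along a vertical side, which requires F to meet the left and
  the right side of the unit square at the same height; at the level of the first-generation
  digits this is hor_link, where a one-row offset is possible only through a pair of opposite
  corners lying in F. Diagonal neighbours touch in a corner, which requires the two opposite
  corners of the square to lie in F.\<close>

definition admissible :: "(nat \<times> nat) set \<Rightarrow> nat \<Rightarrow> nat \<times> nat \<Rightarrow> nat \<times> nat \<Rightarrow> bool" where
  "admissible D N x y \<longleftrightarrow> (hor_adj x y \<and> hor_link D N) \<or> (ver_adj x y \<and> ver_link D N)
    \<or> (diag_adj x y \<and> diag_corners D N) \<or> (antidiag_adj x y \<and> antidiag_corners D N)"

lemma admissible_neighbours:
  assumes "admissible D N x y"
  shows "fst y \<le> fst x + 1" "fst x \<le> fst y + 1" "snd y \<le> snd x + 1" "snd x \<le> snd y + 1"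
  using assms unfolding admissible_def hor_adj_def ver_adj_def diag_adj_def antidiag_adj_def by auto

lemma card_ge_if_all_corners:
  assumes grid: "D \<subseteq> {0..<N} \<times> {0..<N}" and cc: "rel_connected R D"
    and edge: "\<And>x y. x \<in> D \<Longrightarrow> y \<in> D \<Longrightarrow> R x y \<Longrightarrow> admissible D N x y"
    and corners: "diag_corners D N" "antidiag_corners D N"
  shows "2 * N - 1 \<le> card D"
proof -
  have fin: "finite D" using grid by (rule finite_subset) simp
  have c: "(0, 0) \<in> D" "(N - 1, N - 1) \<in> D" "(N - 1, 0) \<in> D" "(0, N - 1) \<in> D"
    using corners unfolding diag_corners_def antidiag_corners_def by auto
  define f where "f z = int (fst z) - int (snd z)" for z :: "nat \<times> nat"
  define g where "g z = int (fst z) + int (snd z)" for z :: "nat \<times> nat"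
  have "spread f D + spread g D \<le> 2 * (int (card D) - 1)"
  proof (rule rel_connected_spread_bound[OF fin cc c(1)])
    fix x y assume "x \<in> D" "y \<in> D" "R x y"
    then have "admissible D N x y" using edge by blast
    from admissible_neighbours[OF this] show "\<bar>f y - f x\<bar> + \<bar>g y - g x\<bar> \<le> 2"
      unfolding f_def g_def by linarith
  qed
  moreover have "f (N - 1, 0) - f (0, N - 1) \<le> spread f D" "g (N - 1, N - 1) - g (0, 0) \<le> spread g D"
    using diff_le_spread[OF fin] c by blast+
  moreover have "N \<ge> 1" using c(1) grid by auto
  ultimately show ?thesis unfolding f_def g_def by (simp add: of_nat_diff)
qed

lemma image_coordinate_eq_interval:
  assumes grid: "D \<subseteq> {0..<N} \<times> {0..<N}" and cc: "rel_connected R D"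
    and edge: "\<And>x y. x \<in> D \<Longrightarrow> y \<in> D \<Longrightarrow> R x y \<Longrightarrow> admissible D N x y"
    and "h = fst \<or> h = snd" "p \<in> D" "h p = 0" "q \<in> D" "h q = N - 1"
  shows "h ` D = {0..<N}"
proof (rule rel_connected_image_eq_interval[OF cc _ _ assms(5-8)])
  show "h ` D \<subseteq> {0..<N}" using assms(4) grid by auto
  fix x y assume "x \<in> D" "y \<in> D" "R x y"
  then have "admissible D N x y" by (rule edge)
  from admissible_neighbours(1,3)[OF this] show "h y \<le> h x + 1" using assms(4) by auto
qed

lemma same_line_connected_if_linked:
  assumes grid: "D \<subseteq> {0..<N} \<times> {0..<N}" and cc: "rel_connected R D"
    and edge: "\<And>x y. x \<in> D \<Longrightarrow> y \<in> D \<Longrightarrow> R x y \<Longrightarrow> admissible D N x y"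
    and no_antidiag: "\<not> antidiag_corners D N"
    and links: "(hor_link D N \<and> ver_link D N) \<or> ((hor_link D N \<or> ver_link D N) \<and> diag_corners D N)"
  shows "fst ` D = {0..<N} \<and> snd ` D = {0..<N} \<and> rel_connected same_line D"
proof -
  have cover: "h ` D = {0..<N}"
    if "h = fst \<or> h = snd" "p \<in> D" "h p = 0" "q \<in> D" "h q = N - 1" for h :: "nat \<times> nat \<Rightarrow> nat" and p q
    by (rule image_coordinate_eq_interval[OF grid cc _ that]) (use edge in blast)
  have edge': "(hor_adj x y \<and> hor_link D N) \<or> (ver_adj x y \<and> ver_link D N) \<or> (diag_adj x y \<and> diag_corners D N)"
    if "x \<in> D" "y \<in> D" "R x y" for x y
    using edge[OF that] no_antidiag unfolding admissible_def by blast
  show ?thesis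
  proof (cases "diag_corners D N")
    case True
    then have c: "(0, 0) \<in> D" "(N - 1, N - 1) \<in> D" unfolding diag_corners_def by auto
    have covers: "fst ` D = {0..<N}" "snd ` D = {0..<N}"
      using cover[OF _ c(1) _ c(2)] by auto
    moreover have "rel_connected same_line D"
    proof (rule same_line_connected_if_diag_connected[OF cc _ c(1) covers])
      show "\<And>x y. x \<in> D \<Longrightarrow> y \<in> D \<Longrightarrow> R x y \<Longrightarrow> hor_adj x y \<or> ver_adj x y \<or> diag_adj x y"
        using edge' by blast
      show "(\<exists>b. (0, b) \<in> D \<and> (N - 1, b) \<in> D) \<or> (\<exists>b. (N - 1, b) \<in> D \<and> (0, Suc b) \<in> D)
        \<or> (\<exists>a. (a, 0) \<in> D \<and> (a, N - 1) \<in> D) \<or> (\<exists>a. (a, N - 1) \<in> D \<and> (Suc a, 0) \<in> D)"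
        using links no_antidiag unfolding hor_link_def ver_link_def by blast
    qed
    ultimately show ?thesis by blast
  next
    case False
    then obtain a b where ab: "(0, b) \<in> D" "(N - 1, b) \<in> D" "(a, 0) \<in> D" "(a, N - 1) \<in> D"
      using links no_antidiag unfolding hor_link_def ver_link_def by blast
    have "fst ` D = {0..<N}" "snd ` D = {0..<N}"
      using cover[OF _ ab(1) _ ab(2)] cover[OF _ ab(3) _ ab(4)] by auto
    moreover have "rel_connected same_line D"
    proof (rule rel_connected_mono[OF cc])
      fix x y assume "x \<in> D" "y \<in> D" "R x y"
      from edge'[OF this] False show "same_line x y"
        unfolding same_line_def hor_adj_def ver_adj_def by auto
    qed
    ultimately show ?thesis by blast
  qed
qed

lemma card_le_if_unlinked:
  assumes grid: "D \<subseteq> {0..<N} \<times> {0..<N}" and cc: "rel_connected R D" and x0: "x0 \<in> D"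
    and edge: "\<And>x y. x \<in> D \<Longrightarrow> y \<in> D \<Longrightarrow> R x y \<Longrightarrow> admissible D N x y"
    and no_antidiag: "\<not> antidiag_corners D N"
    and unlinked: "\<not> ((hor_link D N \<and> ver_link D N) \<or> ((hor_link D N \<or> ver_link D N) \<and> diag_corners D N))"
  shows "card D \<le> N"
proof -
  have edge': "(hor_adj x y \<and> hor_link D N) \<or> (ver_adj x y \<and> ver_link D N) \<or> (diag_adj x y \<and> diag_corners D N)"
    if "x \<in> D" "y \<in> D" "R x y" for x y
    using edge[OF that] no_antidiag unfolding admissible_def by blast
  have gb: "fst ` D \<subseteq> {0..<N}" "snd ` D \<subseteq> {0..<N}" using grid by auto
  consider "\<not> hor_link D N" "\<not> ver_link D N" | "\<not> ver_link D N" "\<not> diag_corners D N"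
    | "\<not> hor_link D N" "\<not> diag_corners D N"
    using unlinked by blast
  then show ?thesis
  proof cases
    case 1
    show ?thesis
    proof (rule rel_connected_card_le[OF cc x0, of "\<lambda>z. int (fst z) - int (snd z)" fst])
      fix x y assume "x \<in> D" "y \<in> D" "R x y"
      then show "int (fst x) - int (snd x) = int (fst y) - int (snd y)"
        using edge'[of x y] 1 unfolding diag_adj_def by auto
    qed (use gb in \<open>auto simp: prod_eq_iff\<close>)
  next
    case 2
    show ?thesis
    proof (rule rel_connected_card_le[OF cc x0, of snd fst])
      fix x y assume "x \<in> D" "y \<in> D" "R x y"
      then show "snd x = snd y" using edge'[of x y] 2 unfolding hor_adj_def by blast
    qed (use gb in \<open>auto simp: prod_eq_iff\<close>)
  next
    case 3
    show ?thesis
    proof (rule rel_connected_card_le[OF cc x0, of fst snd])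
      fix x y assume "x \<in> D" "y \<in> D" "R x y"
      then show "fst x = fst y" using edge'[of x y] 3 unfolding ver_adj_def by blast
    qed (use gb in \<open>auto simp: prod_eq_iff\<close>)
  qed
qed

lemma card_ge_if_no_antidiag_corners:
  assumes grid: "D \<subseteq> {0..<N} \<times> {0..<N}" and big: "N < card D" and cc: "rel_connected R D"
    and edge: "\<And>x y. x \<in> D \<Longrightarrow> y \<in> D \<Longrightarrow> R x y \<Longrightarrow> admissible D N x y"
    and no_antidiag: "\<not> antidiag_corners D N"
  shows "2 * N - 1 \<le> card D"
proof -
  have "finite D" using grid by (rule finite_subset) simp
  obtain x0 where x0: "x0 \<in> D" using big by (metis card.empty ex_in_conv not_less_zero)
  show ?thesis
  proof (cases "(hor_link D N \<and> ver_link D N) \<or> ((hor_link D N \<or> ver_link D N) \<and> diag_corners D N)")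
    case True
    have "fst ` D = {0..<N} \<and> snd ` D = {0..<N} \<and> rel_connected same_line D"
      by (rule same_line_connected_if_linked[OF grid cc _ no_antidiag True]) (use edge in blast)
    then show ?thesis using card_lines_le_if_same_line_connected[OF \<open>finite D\<close> _ x0] by simp
  next
    case False
    have "card D \<le> N"
      by (rule card_le_if_unlinked[OF grid cc x0 _ no_antidiag False]) (use edge in blast)
    with big show ?thesis by simp
  qed
qed

definition mirror :: "nat \<Rightarrow> nat \<times> nat \<Rightarrow> nat \<times> nat" where
  "mirror N z = (N - 1 - fst z, snd z)"

lemma mirror_mirror: "fst z < N \<Longrightarrow> mirror N (mirror N z) = z"
  by (auto simp: mirror_def prod_eq_iff)

lemma mem_mirror_image:
  assumes "D \<subseteq> {0..<N} \<times> {0..<N}"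
  shows "(a, b) \<in> mirror N ` D \<longleftrightarrow> a < N \<and> (N - 1 - a, b) \<in> D"
proof
  assume "(a, b) \<in> mirror N ` D"
  then obtain z where "z \<in> D" "(a, b) = mirror N z" by blast
  with assms show "a < N \<and> (N - 1 - a, b) \<in> D"
    by (auto simp: mirror_def)
next
  assume "a < N \<and> (N - 1 - a, b) \<in> D"
  then show "(a, b) \<in> mirror N ` D"
    using mirror_mirror[of "(a, b)" N] by (metis fst_conv image_eqI mirror_def snd_conv)
qed

lemma mirror_image_grid:
  "D \<subseteq> {0..<N} \<times> {0..<N} \<Longrightarrow> mirror N ` D \<subseteq> {0..<N} \<times> {0..<N}"
  by (auto simp: mirror_def)

lemma card_mirror_image:
  assumes "D \<subseteq> {0..<N} \<times> {0..<N}"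
  shows "card (mirror N ` D) = card D"
proof (rule card_image)
  show "inj_on (mirror N) D"
    using assms by (metis inj_on_inverseI mirror_mirror mem_Sigma_iff atLeastLessThan_iff prod.collapse subsetD)
qed

lemma corners_mirror_image:
  assumes "D \<subseteq> {0..<N} \<times> {0..<N}"
  shows "diag_corners (mirror N ` D) N \<longleftrightarrow> antidiag_corners D N"
    and "antidiag_corners (mirror N ` D) N \<longleftrightarrow> diag_corners D N"
  using assms by (auto simp: diag_corners_def antidiag_corners_def mem_mirror_image)

lemma hor_link_mirror:
  assumes grid: "D \<subseteq> {0..<N} \<times> {0..<N}" and "hor_link D N"
  shows "hor_link (mirror N ` D) N"
proof -
  have "N \<noteq> 0" using assms unfolding hor_link_def by auto
  then show ?thesis using assms(2) corners_mirror_image[OF grid]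
    unfolding hor_link_def by (auto simp: mem_mirror_image[OF grid])
qed

lemma ver_link_mirror:
  assumes grid: "D \<subseteq> {0..<N} \<times> {0..<N}" and "ver_link D N"
  shows "ver_link (mirror N ` D) N"
proof -
  note mem = mem_mirror_image[OF grid]
  consider a where "(a, 0) \<in> D" "(a, N - 1) \<in> D"
    | a where "antidiag_corners D N" "(a, 0) \<in> D" "(Suc a, N - 1) \<in> D"
    | a where "diag_corners D N" "(a, N - 1) \<in> D" "(Suc a, 0) \<in> D"
    using assms(2) unfolding ver_link_def by blast
  then show ?thesis
  proof cases
    case (1 a)
    then show ?thesis using grid unfolding ver_link_def
      by (intro disjI1 exI[of _ "N - 1 - a"]) (auto simp: mem)
  next
    case (2 a)
    then have "Suc a < N" using grid by auto
    with 2 show ?thesis using corners_mirror_image(1)[OF grid] grid unfolding ver_link_def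
      by (intro disjI2 disjI2 conjI exI[of _ "N - 2 - a"]) (auto simp: mem Suc_diff_Suc numeral_2_eq_2)
  next
    case (3 a)
    then have "Suc a < N" using grid by auto
    with 3 show ?thesis using corners_mirror_image(2)[OF grid] grid unfolding ver_link_def
      by (intro disjI2 disjI1 conjI exI[of _ "N - 2 - a"]) (auto simp: mem Suc_diff_Suc numeral_2_eq_2)
  qed
qed

lemma admissible_mirror:
  assumes grid: "D \<subseteq> {0..<N} \<times> {0..<N}" and "x \<in> D" "y \<in> D" and adm: "admissible D N x y"
  shows "admissible (mirror N ` D) N (mirror N x) (mirror N y)"
proof -
  have "fst x < N" "fst y < N" using grid assms(2,3) by auto
  then have "hor_adj x y \<Longrightarrow> hor_adj (mirror N x) (mirror N y)"
    "ver_adj x y \<Longrightarrow> ver_adj (mirror N x) (mirror N y)"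
    "diag_adj x y \<Longrightarrow> antidiag_adj (mirror N x) (mirror N y)"
    "antidiag_adj x y \<Longrightarrow> diag_adj (mirror N x) (mirror N y)"
    unfolding hor_adj_def ver_adj_def diag_adj_def antidiag_adj_def mirror_def by auto
  then show ?thesis
    using adm corners_mirror_image[OF grid] hor_link_mirror[OF grid] ver_link_mirror[OF grid]
    unfolding admissible_def by blast
qed

lemma card_ge_if_admissible_connected:
  assumes grid: "D \<subseteq> {0..<N} \<times> {0..<N}" and big: "N < card D" and cc: "rel_connected R D"
    and edge: "\<And>x y. x \<in> D \<Longrightarrow> y \<in> D \<Longrightarrow> R x y \<Longrightarrow> admissible D N x y"
  shows "2 * N - 1 \<le> card D"
proof -
  consider "diag_corners D N" "antidiag_corners D N" | "\<not> antidiag_corners D N" | "\<not> diag_corners D N"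
    by blast
  then show ?thesis
  proof cases
    case 1
    show ?thesis by (rule card_ge_if_all_corners[OF grid cc _ 1]) (use edge in blast)
  next
    case 2
    show ?thesis by (rule card_ge_if_no_antidiag_corners[OF grid big cc _ 2]) (use edge in blast)
  next
    case 3
    let ?D = "mirror N ` D"
    have "fst z < N" if "z \<in> D" for z using grid that by auto
    then have cc': "rel_connected (\<lambda>u v. R (mirror N u) (mirror N v)) ?D"
      by (intro rel_connected_image[OF cc]) (simp add: mirror_mirror)
    have "2 * N - 1 \<le> card ?D"
    proof (rule card_ge_if_no_antidiag_corners[OF mirror_image_grid[OF grid] _ cc'])
      show "N < card ?D" using big card_mirror_image[OF grid] by simp
      show "\<not> antidiag_corners ?D N"
        using 3 corners_mirror_image(2)[OF grid] by blast
      fix u v assume "u \<in> ?D" "v \<in> ?D" "R (mirror N u) (mirror N v)"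
      then obtain x y where "x \<in> D" "y \<in> D" "u = mirror N x" "v = mirror N y" by blast
      with \<open>R (mirror N u) (mirror N v)\<close> show "admissible ?D N u v"
        using admissible_mirror[OF grid] edge \<open>\<And>z. z \<in> D \<Longrightarrow> fst z < N\<close> mirror_mirror by metis
    qed
    then show ?thesis using card_mirror_image[OF grid] by simp
  qed
qed

section \<open>Digits whose pieces meet\<close>

lemma extreme_coordinate:
  fixes t z :: real
  assumes "0 \<le> t" "t \<le> 1" "d < N" "z * real N = t + real d"
  shows "z = 0 \<Longrightarrow> d = 0 \<and> t = 0" and "z = 1 \<Longrightarrow> d = N - 1 \<and> t = 1"
proof -
  assume "z = 0"
  then show "d = 0 \<and> t = 0" using assms by simp
next
  assume "z = 1"
  then have "real N \<le> real d + 1" using assms by simp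
  then have "d = N - 1" using assms(3) by linarith
  then show "d = N - 1 \<and> t = 1" using assms \<open>z = 1\<close> by (simp add: of_nat_diff)
qed

lemma digit_offset:
  fixes u v :: real
  assumes "0 \<le> u" "u \<le> 1" "0 \<le> v" "v \<le> 1" "u + real d = v + real d'"
  shows "d = d' \<or> (d' = Suc d \<and> u = 1 \<and> v = 0) \<or> (d = Suc d' \<and> u = 0 \<and> v = 1)"
proof -
  have "d' \<le> d + 1" "d \<le> d' + 1" using assms by linarith+
  then consider "d = d'" | "d' = Suc d" | "d = Suc d'" by linarith
  then show ?thesis using assms by cases auto
qed

context gsc
begin

lemma GSC_coordinates:
  assumes "(x, y) \<in> GSC N D"
  shows "0 \<le> x" "x \<le> 1" "0 \<le> y" "y \<le> 1"
  using assms GSC_subset_unit_square by (auto simp: unit_square_def)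

lemma GSC_decompose:
  assumes "(x, y) \<in> GSC N D"
  obtains a b x' y' where "(a, b) \<in> D" "(x', y') \<in> GSC N D"
    "x * real N = x' + real a" "y * real N = y' + real b"
proof -
  obtain a b x' y' where "(a, b) \<in> D" "(x', y') \<in> GSC N D" "(x, y) = gsc_map N (a, b) (x', y')"
    using assms GSC_self_similar by fastforce
  with that show ?thesis using N_pos by (simp add: field_simps)
qed

lemma digit_range: "(a, b) \<in> D \<Longrightarrow> a < N \<and> b < N"
  using digits_grid by auto

lemma corner_digit:
  assumes "(real a, real b) \<in> GSC N D" "a \<le> 1" "b \<le> 1"
  shows "((N - 1) * a, (N - 1) * b) \<in> D"
proof -
  obtain c d x' y' where cd: "(c, d) \<in> D" "(x', y') \<in> GSC N D"
    "real a * real N = x' + real c" "real b * real N = y' + real d"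
    using GSC_decompose[OF assms(1)] by blast
  have "e = (N - 1) * k" if "real k * real N = t + real e" "e < N" "0 \<le> t" "t \<le> 1" "k \<le> 1"
    for k e :: nat and t :: real
    using extreme_coordinate[OF that(3,4,2,1)] that(5) by (cases k) auto
  then show ?thesis using cd digit_range[OF cd(1)] GSC_coordinates[OF cd(2)] assms(2,3) by metis
qed

lemma diag_corners_if_GSC: "(0, 0) \<in> GSC N D \<Longrightarrow> (1, 1) \<in> GSC N D \<Longrightarrow> diag_corners D N"
  using corner_digit[of 0 0] corner_digit[of 1 1] by (simp add: diag_corners_def)

lemma antidiag_corners_if_GSC: "(1, 0) \<in> GSC N D \<Longrightarrow> (0, 1) \<in> GSC N D \<Longrightarrow> antidiag_corners D N"
  using corner_digit[of 1 0] corner_digit[of 0 1] by (simp add: antidiag_corners_def)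

lemma hor_link_if_GSC:
  assumes "(0, y) \<in> GSC N D" "(1, y) \<in> GSC N D"
  shows "hor_link D N"
proof -
  obtain c d x0 y0 where l: "(c, d) \<in> D" "(x0, y0) \<in> GSC N D" "0 * real N = x0 + real c"
    "y * real N = y0 + real d"
    by (rule GSC_decompose[OF assms(1)])
  obtain c' d' x1 y1 where r: "(c', d') \<in> D" "(x1, y1) \<in> GSC N D" "1 * real N = x1 + real c'"
    "y * real N = y1 + real d'"
    by (rule GSC_decompose[OF assms(2)])
  have e: "c = 0" "x0 = 0" "c' = N - 1" "x1 = 1"
    using extreme_coordinate[of x0 c N 0] extreme_coordinate[of x1 c' N 1]
      l r GSC_coordinates[OF l(2)] GSC_coordinates[OF r(2)] digit_range[OF l(1)] digit_range[OF r(1)]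
    by auto
  have "d = d' \<or> (d' = Suc d \<and> y0 = 1 \<and> y1 = 0) \<or> (d = Suc d' \<and> y0 = 0 \<and> y1 = 1)"
    using GSC_coordinates[OF l(2)] GSC_coordinates[OF r(2)] l(4) r(4) by (intro digit_offset) auto
  then show ?thesis
  proof (elim disjE conjE)
    assume "d = d'"
    then show ?thesis using l(1) r(1) e unfolding hor_link_def by (intro disjI1 exI[of _ d]) simp
  next
    assume "d' = Suc d" "y0 = 1" "y1 = 0"
    then have "antidiag_corners D N" using antidiag_corners_if_GSC l(2) r(2) e by simp
    then show ?thesis using l(1) r(1) e \<open>d' = Suc d\<close> unfolding hor_link_def by blast
  next
    assume "d = Suc d'" "y0 = 0" "y1 = 1"
    then have "diag_corners D N" using diag_corners_if_GSC l(2) r(2) e by simp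
    then show ?thesis using l(1) r(1) e \<open>d = Suc d'\<close> unfolding hor_link_def by blast
  qed
qed

lemma ver_link_if_GSC:
  assumes "(x, 0) \<in> GSC N D" "(x, 1) \<in> GSC N D"
  shows "ver_link D N"
proof -
  obtain c d x0 y0 where l: "(c, d) \<in> D" "(x0, y0) \<in> GSC N D" "x * real N = x0 + real c"
    "0 * real N = y0 + real d"
    by (rule GSC_decompose[OF assms(1)])
  obtain c' d' x1 y1 where r: "(c', d') \<in> D" "(x1, y1) \<in> GSC N D" "x * real N = x1 + real c'"
    "1 * real N = y1 + real d'"
    by (rule GSC_decompose[OF assms(2)])
  have e: "d = 0" "y0 = 0" "d' = N - 1" "y1 = 1"
    using extreme_coordinate[of y0 d N 0] extreme_coordinate[of y1 d' N 1]
      l r GSC_coordinates[OF l(2)] GSC_coordinates[OF r(2)] digit_range[OF l(1)] digit_range[OF r(1)]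
    by auto
  have "c = c' \<or> (c' = Suc c \<and> x0 = 1 \<and> x1 = 0) \<or> (c = Suc c' \<and> x0 = 0 \<and> x1 = 1)"
    using GSC_coordinates[OF l(2)] GSC_coordinates[OF r(2)] l(3) r(3) by (intro digit_offset) auto
  then show ?thesis
  proof (elim disjE conjE)
    assume "c = c'"
    then show ?thesis using l(1) r(1) e unfolding ver_link_def by (intro disjI1 exI[of _ c]) simp
  next
    assume "c' = Suc c" "x0 = 1" "x1 = 0"
    then have "antidiag_corners D N" using antidiag_corners_if_GSC l(2) r(2) e by simp
    then show ?thesis using l(1) r(1) e \<open>c' = Suc c\<close> unfolding ver_link_def by blast
  next
    assume "c = Suc c'" "x0 = 0" "x1 = 1"
    then have "diag_corners D N" using diag_corners_if_GSC l(2) r(2) e by simp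
    then show ?thesis using l(1) r(1) e \<open>c = Suc c'\<close> unfolding ver_link_def by blast
  qed
qed

lemma admissible_if_pieces_meet:
  assumes "(a, b) \<in> D" "(a', b') \<in> D" "(a, b) \<noteq> (a', b')"
    and u: "(u1, u2) \<in> GSC N D" and v: "(v1, v2) \<in> GSC N D"
    and meet: "gsc_map N (a, b) (u1, u2) = gsc_map N (a', b') (v1, v2)"
  shows "admissible D N (a, b) (a', b')"
proof -
  have "u1 + real a = v1 + real a'" "u2 + real b = v2 + real b'"
    using meet N_pos by (simp_all add: divide_cancel_right)
  then have X: "a = a' \<or> (a' = Suc a \<and> u1 = 1 \<and> v1 = 0) \<or> (a = Suc a' \<and> u1 = 0 \<and> v1 = 1)"
    and Y: "b = b' \<or> (b' = Suc b \<and> u2 = 1 \<and> v2 = 0) \<or> (b = Suc b' \<and> u2 = 0 \<and> v2 = 1)"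
    and eqs: "a = a' \<Longrightarrow> u1 = v1" "b = b' \<Longrightarrow> u2 = v2"
    using GSC_coordinates[OF u] GSC_coordinates[OF v] by (auto intro!: digit_offset)
  have "hor_link D N" if "b = b'" "a \<noteq> a'"
    using X eqs(2)[OF that(1)] that(2) hor_link_if_GSC u v by auto
  moreover have "ver_link D N" if "a = a'" "b \<noteq> b'"
    using Y eqs(1)[OF that(1)] that(2) ver_link_if_GSC u v by auto
  moreover have "diag_corners D N" if "a' = Suc a \<and> b' = Suc b \<or> a = Suc a' \<and> b = Suc b'"
    using that X Y diag_corners_if_GSC u v by auto
  moreover have "antidiag_corners D N" if "a' = Suc a \<and> b = Suc b' \<or> a = Suc a' \<and> b' = Suc b"
    using that X Y antidiag_corners_if_GSC u v by auto
  ultimately show ?thesis using X Y assms(3)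
    unfolding admissible_def hor_adj_def ver_adj_def diag_adj_def antidiag_adj_def by auto
qed

lemma gsc_map_GSC_subset: "i \<in> D \<Longrightarrow> gsc_map N i ` GSC N D \<subseteq> GSC N D"
  by (subst (2) GSC_self_similar) blast

lemma rel_connected_if_connected_GSC:
  assumes conn: "connected (GSC N D)"
  shows "rel_connected (\<lambda>i j. i \<noteq> j \<and> (\<exists>u\<in>GSC N D. \<exists>v\<in>GSC N D. gsc_map N i u = gsc_map N j v)) D"
  unfolding rel_connected_def
proof (intro allI impI)
  fix S assume S: "S \<subseteq> D" "S \<noteq> {}" "S \<noteq> D"
  let ?F = "GSC N D"
  let ?A = "\<Union>i\<in>S. gsc_map N i ` ?F" and ?B = "\<Union>i\<in>D - S. gsc_map N i ` ?F"
  have closed: "closed (\<Union>i\<in>T. gsc_map N i ` ?F)" if "T \<subseteq> D" for T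
    using that finite_digits finite_subset
    by (intro compact_imp_closed compact_UN compact_continuous_image continuous_on_gsc_map compact_GSC)
      auto
  have "?F = (\<Union>i\<in>D. gsc_map N i ` ?F)" by (rule GSC_self_similar)
  also have "\<dots> = ?A \<union> ?B" using S(1) by blast
  finally have cover: "?F \<subseteq> ?A \<union> ?B" by (rule equalityD1)
  obtain q where q: "q \<in> ?F" using GSC_nonempty by blast
  obtain i j where ij: "i \<in> S" "j \<in> D - S" using S by blast
  then have "gsc_map N i q \<in> ?A \<inter> ?F" "gsc_map N j q \<in> ?B \<inter> ?F"
    using q S(1) gsc_map_GSC_subset[of i] gsc_map_GSC_subset[of j] by auto
  then have "?A \<inter> ?B \<inter> ?F \<noteq> {}"
    using connected_closedD[OF conn _ cover closed[OF S(1)] closed[OF Diff_subset]] by blast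
  then obtain z where z: "z \<in> ?A" "z \<in> ?B" by blast
  from z(1) obtain i u where i: "i \<in> S" "u \<in> ?F" "z = gsc_map N i u" by blast
  from z(2) obtain j v where j: "j \<in> D - S" "v \<in> ?F" "z = gsc_map N j v" by blast
  have "i \<noteq> j" "gsc_map N i u = gsc_map N j v" using i j by auto
  then show "\<exists>i\<in>S. \<exists>j\<in>D - S. i \<noteq> j \<and> (\<exists>u\<in>?F. \<exists>v\<in>?F. gsc_map N i u = gsc_map N j v)"
    using i j by blast
qed

end

theorem card_ge_if_connected_GSC:
  assumes "N \<ge> 2" and grid: "D \<subseteq> {0..<N} \<times> {0..<N}" and big: "N < card D"
    and "connected (GSC N D)"
  shows "2 * N - 1 \<le> card D"
proof -
  interpret gsc N D using assms by unfold_locales auto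
  show ?thesis
  proof (rule card_ge_if_admissible_connected[OF grid big rel_connected_if_connected_GSC])
    fix i j assume ij: "i \<in> D" "j \<in> D"
      "i \<noteq> j \<and> (\<exists>u\<in>GSC N D. \<exists>v\<in>GSC N D. gsc_map N i u = gsc_map N j v)"
    then obtain u v where "u \<in> GSC N D" "v \<in> GSC N D" "gsc_map N i u = gsc_map N j v" by blast
    with ij show "admissible D N i j"
      using admissible_if_pieces_meet[of "fst i" "snd i" "fst j" "snd j" "fst u" "snd u" "fst v" "snd v"]
      by simp
  qed fact
qed

section \<open>Connected carpets with a given number of digits\<close>

lemma connected_UN_if_linked:
  assumes conn: "\<And>i. i \<in> I \<Longrightarrow> connected (P i)" and c: "\<And>i. i \<in> I \<Longrightarrow> c i \<in> P i"
    and linked: "\<And>i. i \<in> I \<Longrightarrow> connected_component (\<Union>i\<in>I. P i) x0 (c i)"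
  shows "connected (\<Union>i\<in>I. P i)"
proof -
  have "connected_component (\<Union>i\<in>I. P i) x0 x" if "x \<in> (\<Union>i\<in>I. P i)" for x
  proof -
    from that obtain i where "i \<in> I" "x \<in> P i" by blast
    then have "connected_component (\<Union>i\<in>I. P i) (c i) x"
      using conn c by (intro connected_componentI[of "P i"]) auto
    then show ?thesis using linked[OF \<open>i \<in> I\<close>] connected_component_trans by metis
  qed
  then show ?thesis unfolding connected_iff_connected_component
    by (metis connected_component_sym connected_component_trans)
qed

text \<open>The bottom-left corners of the pieces are linked to (0, 0) along each row of digits and
  down the left column: the corner (1, 0) of a piece is the corner (0, 0) of its right neighbour,
  and its corner (0, 1) the corner (0, 0) of the piece above.\<close>

lemma connected_pieces_if_linked:
  assumes K: "connected K" "(0, 0) \<in> K" "(1, 0) \<in> K" "(0, N - 1) \<in> D \<Longrightarrow> (0, 1) \<in> K"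
    and origin: "(0, 0) \<in> D"
    and left_closed: "\<forall>a b. (Suc a, b) \<in> D \<longrightarrow> (a, b) \<in> D"
    and down_closed: "\<forall>b. (0, Suc b) \<in> D \<longrightarrow> (0, b) \<in> D \<and> (0, N - 1) \<in> D"
  shows "connected (\<Union>i\<in>D. gsc_map N i ` K)"
proof -
  let ?U = "\<Union>i\<in>D. gsc_map N i ` K"
  have piece: "connected_component ?U (gsc_map N i p) (gsc_map N i q)"
    if "i \<in> D" "p \<in> K" "q \<in> K" for i p q
    using that connected_continuous_image[OF continuous_on_gsc_map K(1)]
    by (intro connected_componentI[of "gsc_map N i ` K"]) auto
  have column: "connected_component ?U (0, 0) (gsc_map N (0, b) (0, 0))" if "(0, b) \<in> D" for b
    using that
  proof (induction b)
    case 0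
    have "gsc_map N (0, 0) (0, 0) \<in> ?U" by (rule UN_I[OF origin imageI[OF K(2)]])
    then show ?case by simp
  next
    case (Suc b)
    have "(0, b) \<in> D" "(0, N - 1) \<in> D" using down_closed Suc.prems by blast+
    then have "connected_component ?U (gsc_map N (0, b) (0, 0)) (gsc_map N (0, b) (0, 1))"
      using piece K(2,4) by blast
    moreover have "gsc_map N (0, b) (0, 1) = gsc_map N (0, Suc b) (0, 0)" by (simp add: add.commute)
    ultimately have "connected_component ?U (gsc_map N (0, b) (0, 0)) (gsc_map N (0, Suc b) (0, 0))"
      by simp
    then show ?case by (rule connected_component_trans[OF Suc.IH[OF \<open>(0, b) \<in> D\<close>]])
  qed
  have row: "connected_component ?U (0, 0) (gsc_map N (a, b) (0, 0))" if "(a, b) \<in> D" for a b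
    using that
  proof (induction a)
    case 0
    then show ?case by (rule column)
  next
    case (Suc a)
    have "(a, b) \<in> D" using left_closed Suc.prems by blast
    then have "connected_component ?U (gsc_map N (a, b) (0, 0)) (gsc_map N (a, b) (1, 0))"
      using piece K(2,3) by blast
    moreover have "gsc_map N (a, b) (1, 0) = gsc_map N (Suc a, b) (0, 0)" by (simp add: add.commute)
    ultimately have "connected_component ?U (gsc_map N (a, b) (0, 0)) (gsc_map N (Suc a, b) (0, 0))"
      by simp
    then show ?case by (rule connected_component_trans[OF Suc.IH[OF \<open>(a, b) \<in> D\<close>]])
  qed
  show ?thesis
  proof (rule connected_UN_if_linked)
    show "connected (gsc_map N i ` K)" for i
      by (rule connected_continuous_image[OF continuous_on_gsc_map K(1)])
    show "gsc_map N i (0, 0) \<in> gsc_map N i ` K" for i using K(2) by blast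
    show "connected_component ?U (0, 0) (gsc_map N i (0, 0))" if "i \<in> D" for i
      using row[of "fst i" "snd i"] that by simp
  qed
qed

context gsc
begin

lemma fixed_point_in_gsc_approx:
  assumes "i \<in> D" "gsc_map N i p = p" "p \<in> unit_square"
  shows "p \<in> gsc_approx N D k"
proof (induction k)
  case (Suc k)
  then have "gsc_map N i p \<in> gsc_approx N D (Suc k)" using assms(1) by auto
  then show ?case using assms(2) by simp
qed (use assms(3) in simp)

lemma connected_GSC_if_linked:
  assumes origin: "(0, 0) \<in> D" and right: "(N - 1, 0) \<in> D"
    and left_closed: "\<forall>a b. (Suc a, b) \<in> D \<longrightarrow> (a, b) \<in> D"
    and down_closed: "\<forall>b. (0, Suc b) \<in> D \<longrightarrow> (0, b) \<in> D \<and> (0, N - 1) \<in> D"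
  shows "connected (GSC N D)"
proof -
  have N1: "real (N - 1) + 1 = real N" using N_pos by (simp add: of_nat_diff)
  have "connected (gsc_approx N D k)" for k
  proof (induction k)
    case 0
    show ?case by (simp add: unit_square_def convex_connected convex_Times)
  next
    case (Suc k)
    have "(0, 0) \<in> gsc_approx N D k" "(1, 0) \<in> gsc_approx N D k"
      "(0, N - 1) \<in> D \<Longrightarrow> (0, 1) \<in> gsc_approx N D k"
      using fixed_point_in_gsc_approx[OF origin] fixed_point_in_gsc_approx[OF right]
        fixed_point_in_gsc_approx[of "(0, N - 1)" "(0, 1)"] N1 N_pos
      by (auto simp: unit_square_def)
    then show ?case unfolding gsc_approx.simps
      by (rule connected_pieces_if_linked[OF Suc _ _ _ origin left_closed down_closed])
  qed
  then show ?thesis unfolding GSC_eq_INT_gsc_approx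
    by (intro connected_nest compact_gsc_approx gsc_approx_antimono)
qed

end

lemma exists_left_closed_subset:
  fixes N :: nat
  assumes "m \<le> (N - 1) * (N - 1)"
  shows "\<exists>E \<subseteq> {1..<N} \<times> {1..<N}. card E = m \<and> (\<forall>a b. (Suc a, b) \<in> E \<longrightarrow> 1 \<le> a \<longrightarrow> (a, b) \<in> E)"
  using assms
proof (induction m)
  case 0
  show ?case by (intro exI[of _ "{}"]) simp
next
  case (Suc m)
  then obtain E where E: "E \<subseteq> {1..<N} \<times> {1..<N}" "card E = m"
    "\<forall>a b. (Suc a, b) \<in> E \<longrightarrow> 1 \<le> a \<longrightarrow> (a, b) \<in> E"
    by auto
  have "finite E" using E(1) by (rule finite_subset) simp
  moreover have "card E < card ({1..<N} \<times> {1..<N})"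
    using E(2) Suc.prems by (simp add: card_cartesian_product)
  ultimately have "\<not> {1..<N} \<times> {1..<N} \<subseteq> E" using card_mono leD by blast
  then obtain a0 b where a0: "a0 \<in> {1..<N}" "b \<in> {1..<N}" "(a0, b) \<notin> E" by blast
  define a where "a = (LEAST a. a \<in> {1..<N} \<and> (a, b) \<notin> E)"
  have a: "a \<in> {1..<N}" "(a, b) \<notin> E"
    using LeastI[of "\<lambda>a. a \<in> {1..<N} \<and> (a, b) \<notin> E", OF conjI[OF a0(1,3)]] unfolding a_def by auto
  have left_full: "(c, b) \<in> E" if "1 \<le> c" "c < a" for c
    using not_less_Least[of c "\<lambda>a. a \<in> {1..<N} \<and> (a, b) \<notin> E"] that a(1) unfolding a_def by auto
  show ?case
    using E a a0(2) left_full \<open>finite E\<close> by (intro exI[of _ "insert (a, b) E"]) auto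
qed

context gsc
begin

lemma connected_GSC_L_shape:
  assumes E: "E \<subseteq> {1..<N} \<times> {1..<N}" "\<forall>a b. (Suc a, b) \<in> E \<longrightarrow> 1 \<le> a \<longrightarrow> (a, b) \<in> E"
    and D: "D = {0..<N} \<times> {0} \<union> {0} \<times> {1..<N} \<union> E"
  shows "connected (GSC N D)"
proof (rule connected_GSC_if_linked)
  show "(0, 0) \<in> D" "(N - 1, 0) \<in> D" using D N_pos by auto
  show "\<forall>a b. (Suc a, b) \<in> D \<longrightarrow> (a, b) \<in> D"
  proof (intro allI impI)
    fix a b assume "(Suc a, b) \<in> D"
    then show "(a, b) \<in> D" using E unfolding D by (cases a) auto
  qed
  show "\<forall>b. (0, Suc b) \<in> D \<longrightarrow> (0, b) \<in> D \<and> (0, N - 1) \<in> D"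
    using E N_ge_2 unfolding D by auto
qed

end

theorem exists_connected_GSC:
  assumes "N \<ge> 2" and k: "(2 * N - 1 \<le> k \<and> k \<le> N ^ 2 - 1) \<or> k = N"
  shows "\<exists>D. D \<subseteq> {0..<N} \<times> {0..<N} \<and> card D = k \<and> connected (GSC N D)"
proof (cases "k = N")
  case True
  let ?D = "{0..<N} \<times> {0::nat}"
  interpret gsc N ?D using assms by unfold_locales auto
  have "connected (GSC N ?D)"
    by (rule connected_GSC_if_linked) (use N_pos in auto)
  then show ?thesis using True by (intro exI[of _ ?D]) (auto simp: card_cartesian_product)
next
  case False
  obtain n where "N = Suc n" using assms(1) by (cases N) auto
  then have "k - (2 * N - 1) \<le> (N - 1) * (N - 1)"
    using k False by (simp add: power2_eq_square) linarith
  then obtain E where E: "E \<subseteq> {1..<N} \<times> {1..<N}" "card E = k - (2 * N - 1)"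
    "\<forall>a b. (Suc a, b) \<in> E \<longrightarrow> 1 \<le> a \<longrightarrow> (a, b) \<in> E"
    using exists_left_closed_subset by blast
  define D where "D = {0..<N} \<times> {0} \<union> {0} \<times> {1..<N} \<union> E"
  have grid: "D \<subseteq> {0..<N} \<times> {0..<N}" using E(1) assms(1) unfolding D_def by auto
  interpret gsc N D using assms grid unfolding D_def by unfold_locales auto
  have "finite E" using E(1) by (rule finite_subset) simp
  then have "card D = N + (N - 1) + card E"
    unfolding D_def using E(1)
    by (subst card_Un_disjoint card_Un_disjoint; auto simp: card_cartesian_product)+
  then have "card D = k" using E(2) False k by simp
  then show ?thesis using grid connected_GSC_L_shape[OF E(1,3) D_def] by blast
qed

theorem mainTheorem6:
  fixes N :: nat
  assumes "N \<ge> 2"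
  shows "(\<forall>D. D \<subseteq> {0..<N} \<times> {0..<N} \<and> 1 < card D \<and> card D < N ^ 2
              \<and> connected (GSC N D) \<and> card D > N \<longrightarrow> card D \<ge> 2 * N - 1)
       \<and> (\<forall>k::nat. ((2 * N - 1 \<le> k \<and> k \<le> N ^ 2 - 1) \<or> k = N) \<longrightarrow>
              (\<exists>D. D \<subseteq> {0..<N} \<times> {0..<N} \<and> card D = k \<and> connected (GSC N D)))"
  using card_ge_if_connected_GSC[OF assms] exists_connected_GSC[OF assms] by blast

end
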